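(* Let $p\in(0,1)$ and, for each integer $n\ge 1$, let $X_n$ be the maximum weight of a directed path from vertex $1$ to vertex $n$ in the transitive tournament on $\{1,\ldots,n\}$ whose edges carry independent $\mathrm{Bernoulli}(p)$ weights. Put $g(0)=1$ and $g(n)=1+\mathbb{E}[X_n]$ for $n\ge1$, and let $G_p(x)=\sum_{n\ge0}g(n)x^n$. Then, as formal power series in $x$, \[ G_p(x)=1+\frac{x}{(1-x)^2B_p(x)}, \qquad\text{where } B_p(x)=\sum_{n\ge0}(1-p)^{\binom{n+1}{2}}x^n. \]
   Context: The transitive tournament on $\{1,\ldots,n\}$ is the directed graph with vertex set $\{1,\ldots,n\}$ and a directed edge $(i,j)$ for every $1\le i<j\le n$. Each edge $(i,j)$ is given a weight $w(i,j)\in\{0,1\}$. These weights are independent, and each equals $1$ with probability $p$ and $0$ with probability $1-p$. The weight of a directed path is the sum of the weights of its edges. $X_n$ is the maximum weight over all directed paths from $1$ to $n$; the one-vertex path has weight $0$, so $X_1=0$. Binomial coefficients satisfy $\binom{0}{2}=\binom{1}{2}=0$. Because $B_p(x)$ has constant term $1$, it is invertible as a formal power series. *)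

theory Defs
  imports "HOL-Probability.Probability" "HOL-Computational_Algebra.Formal_Power_Series"
begin

definition tt_edges :: "nat \<Rightarrow> (nat \<times> nat) set" where
  "tt_edges n = {(i, j). 1 \<le> i \<and> i < j \<and> j \<le> n}"

definition tt_paths :: "nat \<Rightarrow> nat list set" where
  "tt_paths n = {vs. vs \<noteq> [] \<and> sorted_wrt (<) vs \<and> hd vs = 1 \<and> last vs = n}"

definition path_weight :: "((nat \<times> nat) \<Rightarrow> bool) \<Rightarrow> nat list \<Rightarrow> real" where
  "path_weight w vs = sum_list (map (\<lambda>e. of_bool (w e)) (zip vs (tl vs)))"

definition max_path_weight :: "nat \<Rightarrow> ((nat \<times> nat) \<Rightarrow> bool) \<Rightarrow> real" where
  "max_path_weight n w = Max (path_weight w ` tt_paths n)"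

definition weight_distr :: "real \<Rightarrow> nat \<Rightarrow> ((nat \<times> nat) \<Rightarrow> bool) pmf" where
  "weight_distr p n = Pi_pmf (tt_edges n) False (\<lambda>_. bernoulli_pmf p)"

definition exp_X :: "real \<Rightarrow> nat \<Rightarrow> real" where
  "exp_X p n = measure_pmf.expectation (weight_distr p n) (max_path_weight n)"

definition g_seq :: "real \<Rightarrow> nat \<Rightarrow> real" where
  "g_seq p n = (if n = 0 then 1 else 1 + exp_X p n)"

definition G_fps :: "real \<Rightarrow> real fps" where
  "G_fps p = Abs_fps (g_seq p)"

definition B_fps :: "real \<Rightarrow> real fps" where
  "B_fps p = Abs_fps (\<lambda>n. (1 - p) ^ (Suc n choose 2))"

end

theory Submission
  imports Defs
begin

text \<open>
  Write X_j for the maximum weight of a path from 1 to j. Since X_j is nondecreasing in j, the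
  vertices i \<le> n with X_i = X_n form a final segment T_n of {1..n}, the top level, and
  X_(n+1) = X_n + 1 exactly when some vertex of T_n has an edge of weight 1 to n + 1; otherwise
  n + 1 joins the top level. The edges into n + 1 are independent of everything that determines
  T_n, so R_n = |T_n| falls back to 1 with probability 1 - (1 - p)^R_n and grows by one
  otherwise. With u_m = P(R_m = 1) this gives P(R_n = k) = u_(n+1-k) (1 - p)^(k choose 2) and
  E X_(n+1) - E X_n = u_(n+1). For U(x) = \<Sum> u_m x^m the second identity says
  (G_p(x) - 1)(1 - x) = U(x), and summing the first over k gives (1 - x) U(x) B_p(x) = x.
\<close>

lemma finite_set_pmf_Pi_pmf:
  fixes p :: "'a \<Rightarrow> 'b::finite pmf"
  assumes "finite A"
  shows "finite (set_pmf (Pi_pmf A dflt p))"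
  using assms by (subst set_Pi_pmf) (auto intro!: finite_PiE_dflt)

lemma pmf_map_pmf_conv_expectation:
  "pmf (map_pmf f M) x = measure_pmf.expectation M (\<lambda>y. of_bool (f y = x))"
proof -
  have "pmf (map_pmf f M) x = measure_pmf.expectation M (indicator (f -` {x}))"
    by (simp add: pmf_map)
  also have "\<dots> = measure_pmf.expectation M (\<lambda>y. of_bool (f y = x))"
    by (intro Bochner_Integration.integral_cong) (auto simp: indicator_def)
  finally show ?thesis .
qed

lemma expectation_pair_pmf:
  fixes h :: "'a \<times> 'b \<Rightarrow> real"
  assumes A: "finite (set_pmf A)" and B: "finite (set_pmf B)"
  shows "measure_pmf.expectation (pair_pmf A B) h =
         measure_pmf.expectation A (\<lambda>a. measure_pmf.expectation B (\<lambda>b. h (a, b)))"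
proof -
  have "measure_pmf.expectation (pair_pmf A B) h =
        (\<Sum>x\<in>set_pmf A \<times> set_pmf B. h x * pmf (pair_pmf A B) x)"
    by (rule integral_measure_pmf_real) (use A B in auto)
  also have "\<dots> = (\<Sum>a\<in>set_pmf A. \<Sum>b\<in>set_pmf B. h (a, b) * (pmf A a * pmf B b))"
    unfolding sum.cartesian_product by (intro sum.cong refl) (auto simp: pmf_pair)
  also have "\<dots> = (\<Sum>a\<in>set_pmf A. (\<Sum>b\<in>set_pmf B. h (a, b) * pmf B b) * pmf A a)"
    by (intro sum.cong refl) (simp add: sum_distrib_left sum_distrib_right mult_ac)
  also have "\<dots> = (\<Sum>a\<in>set_pmf A. measure_pmf.expectation B (\<lambda>b. h (a, b)) * pmf A a)"
    by (intro sum.cong refl arg_cong2[where f = "(*)"] integral_measure_pmf_real[symmetric])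
       (use B in auto)
  also have "\<dots> = measure_pmf.expectation A (\<lambda>a. measure_pmf.expectation B (\<lambda>b. h (a, b)))"
    by (rule integral_measure_pmf_real[symmetric]) (use A in auto)
  finally show ?thesis .
qed

lemma map_pmf_Bex_Pi_pmf_bernoulli:
  assumes "finite A" and "L \<subseteq> A" and "0 \<le> p" and "p \<le> 1"
  shows "map_pmf (\<lambda>f. \<exists>x\<in>L. f x) (Pi_pmf A dflt (\<lambda>_. bernoulli_pmf p)) =
         bernoulli_pmf (1 - (1 - p) ^ card L)"
proof -
  let ?M = "map_pmf (\<lambda>f. \<exists>x\<in>L. f x) (Pi_pmf A dflt (\<lambda>_. bernoulli_pmf p))"
  have "(\<lambda>f. \<exists>x\<in>L. f x) -` {False} = Pi A (\<lambda>x. if x \<in> L then {False} else UNIV)"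
    using assms(2) by (auto simp: Pi_def)
  then have "pmf ?M False =
             (\<Prod>x\<in>A. measure_pmf.prob (bernoulli_pmf p) (if x \<in> L then {False} else UNIV))"
    using assms by (simp add: pmf_map measure_Pi_pmf_Pi)
  also have "\<dots> = (\<Prod>x\<in>A. if x \<in> L then 1 - p else 1)"
    using assms by (intro prod.cong refl) (simp add: measure_pmf_single)
  also have "\<dots> = (1 - p) ^ card L"
    using assms by (simp add: prod.If_cases Int_absorb1)
  finally have False_eq: "pmf ?M False = (1 - p) ^ card L" .
  have "(\<Sum>b\<in>UNIV. pmf ?M b) = 1" by (rule sum_pmf_eq_1) auto
  then have True_eq: "pmf ?M True = 1 - (1 - p) ^ card L"
    using False_eq by (simp add: UNIV_bool)
  have "0 \<le> (1 - p) ^ card L" "(1 - p) ^ card L \<le> 1"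
    using assms by (simp_all add: power_le_one)
  then have "0 \<le> 1 - (1 - p) ^ card L" "1 - (1 - p) ^ card L \<le> 1" by simp_all
  show ?thesis
  proof (rule pmf_eqI)
    fix b :: bool
    show "pmf ?M b = pmf (bernoulli_pmf (1 - (1 - p) ^ card L)) b"
      using False_eq True_eq \<open>0 \<le> 1 - (1 - p) ^ card L\<close> \<open>1 - (1 - p) ^ card L \<le> 1\<close>
      by (cases b) simp_all
  qed
qed

section \<open>Paths in the transitive tournament\<close>

lemma finite_tt_edges: "finite (tt_edges n)"
proof -
  have "tt_edges n \<subseteq> {1..n} \<times> {1..n}" by (auto simp: tt_edges_def)
  then show ?thesis by (rule finite_subset) simp
qed

lemma tt_paths_subset:
  assumes "vs \<in> tt_paths n"
  shows "set vs \<subseteq> {1..n}"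
proof
  fix x assume x: "x \<in> set vs"
  from assms have ne: "vs \<noteq> []" and s: "sorted_wrt (<) vs" and "hd vs = 1" "last vs = n"
    by (auto simp: tt_paths_def)
  have "hd vs \<le> x" using s x ne by (cases vs) auto
  moreover have "\<forall>y\<in>set vs. y \<le> last vs"
    using s by (induction vs rule: induct_list012) auto
  ultimately show "x \<in> {1..n}" using x \<open>hd vs = 1\<close> \<open>last vs = n\<close> by simp
qed

lemma finite_tt_paths: "finite (tt_paths n)"
proof (rule finite_subset)
  show "tt_paths n \<subseteq> sorted_list_of_set ` Pow {1..n}"
  proof
    fix vs assume vs: "vs \<in> tt_paths n"
    then have "sorted_wrt (<) vs" by (simp add: tt_paths_def)
    then have "vs = sorted_list_of_set (set vs)"
      by (simp add: strict_sorted_iff sorted_list_of_set.idem_if_sorted_distinct)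
    then show "vs \<in> sorted_list_of_set ` Pow {1..n}" using tt_paths_subset[OF vs] by blast
  qed
qed simp

lemma snoc_in_tt_paths:
  assumes "vs \<in> tt_paths i" and "i < j"
  shows "vs @ [j] \<in> tt_paths j"
  using assms tt_paths_subset[OF assms(1)] by (fastforce simp: tt_paths_def sorted_wrt_append)

lemma tt_paths_nonempty: "1 \<le> n \<Longrightarrow> tt_paths n \<noteq> {}"
proof -
  assume "1 \<le> n"
  have "[1] \<in> tt_paths 1" by (simp add: tt_paths_def)
  then show ?thesis
    using \<open>1 \<le> n\<close> snoc_in_tt_paths[of "[1]" 1 n] by (cases "n = 1") auto
qed

lemma tt_paths_one: "tt_paths 1 = {[1]}"
proof -
  have "vs = [1]" if "vs \<in> tt_paths 1" for vs
  proof -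
    have "set vs \<subseteq> {1}" "distinct vs" "vs \<noteq> []"
      using that tt_paths_subset[OF that] by (auto simp: tt_paths_def strict_sorted_iff)
    then show ?thesis by (cases vs) (auto simp: subset_singleton_iff)
  qed
  then show ?thesis by (auto simp: tt_paths_def)
qed

lemma tt_paths_snocE:
  assumes "vs \<in> tt_paths j" and "2 \<le> j"
  obtains us where "vs = us @ [j]" and "us \<in> tt_paths (last us)" and "last us < j"
proof -
  from assms have ne: "vs \<noteq> []" and s: "sorted_wrt (<) vs" and h: "hd vs = 1" and "last vs = j"
    by (auto simp: tt_paths_def)
  define us where "us = butlast vs"
  have eq: "vs = us @ [j]"
    unfolding us_def using ne \<open>last vs = j\<close> by (metis append_butlast_last_id)
  have "us \<noteq> []"
  proof
    assume "us = []"
    then show False using eq h assms(2) by simp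
  qed
  moreover have "hd us = 1" using eq h \<open>us \<noteq> []\<close> by simp
  moreover have "sorted_wrt (<) (us @ [j])" using s eq by simp
  ultimately have "us \<in> tt_paths (last us)" "last us < j"
    by (auto simp: tt_paths_def sorted_wrt_append)
  with eq that show thesis by blast
qed

lemma path_weight_snoc:
  "vs \<noteq> [] \<Longrightarrow> path_weight w (vs @ [j]) = path_weight w vs + of_bool (w (last vs, j))"
  by (induction vs rule: induct_list012) (auto simp: path_weight_def)

lemma path_weight_in_Nats: "path_weight w vs \<in> \<nat>"
proof -
  have "sum_list (map (\<lambda>e. of_bool (w e)) es) \<in> (\<nat> :: real set)" for es
    by (induction es) (auto intro: Nats_add)
  then show ?thesis by (simp add: path_weight_def)
qed

lemma max_path_weight_attained:
  "1 \<le> n \<Longrightarrow> \<exists>vs\<in>tt_paths n. max_path_weight n w = path_weight w vs"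
  unfolding max_path_weight_def
  using Max_in[of "path_weight w ` tt_paths n"] finite_tt_paths tt_paths_nonempty by fastforce

lemma path_weight_le_max_path_weight:
  "vs \<in> tt_paths n \<Longrightarrow> path_weight w vs \<le> max_path_weight n w"
  unfolding max_path_weight_def using finite_tt_paths by (intro Max_ge) auto

lemma max_path_weight_in_Nats: "1 \<le> n \<Longrightarrow> max_path_weight n w \<in> \<nat>"
  using max_path_weight_attained path_weight_in_Nats by metis

lemma max_path_weight_one: "max_path_weight 1 w = 0"
  unfolding max_path_weight_def tt_paths_one by (simp add: path_weight_def)

lemma max_path_weight_extend:
  assumes "1 \<le> i" and "i < j"
  shows "max_path_weight i w + of_bool (w (i, j)) \<le> max_path_weight j w"
proof -
  obtain vs where vs: "vs \<in> tt_paths i" "max_path_weight i w = path_weight w vs"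
    using max_path_weight_attained[OF assms(1)] by blast
  then have "vs \<noteq> []" "last vs = i" by (auto simp: tt_paths_def)
  then have "path_weight w (vs @ [j]) = max_path_weight i w + of_bool (w (i, j))"
    using vs(2) by (simp add: path_weight_snoc)
  then show ?thesis
    using path_weight_le_max_path_weight[where w = w, OF snoc_in_tt_paths[OF vs(1) assms(2)]] by simp
qed

lemma max_path_weight_mono:
  assumes "1 \<le> i" and "i \<le> j"
  shows "max_path_weight i w \<le> max_path_weight j w"
  using assms max_path_weight_extend[of i j w] by (cases "i = j"; cases "w (i, j)") auto

lemma max_path_weight_last_edge:
  assumes "2 \<le> j"
  obtains i where "1 \<le> i" and "i < j"
    and "max_path_weight j w = max_path_weight i w + of_bool (w (i, j))"
proof -
  obtain vs where vs: "vs \<in> tt_paths j" "max_path_weight j w = path_weight w vs"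
    using max_path_weight_attained[of j w] assms by auto
  obtain us where us: "vs = us @ [j]" "us \<in> tt_paths (last us)" "last us < j"
    by (rule tt_paths_snocE[OF vs(1) assms])
  define i where "i = last us"
  have "us \<noteq> []" using us(2) by (simp add: tt_paths_def)
  then have "1 \<le> i" using tt_paths_subset[OF us(2)] last_in_set by (fastforce simp: i_def)
  have "max_path_weight j w = path_weight w us + of_bool (w (i, j))"
    using vs(2) us(1) path_weight_snoc[OF \<open>us \<noteq> []\<close>] by (simp add: i_def)
  also have "\<dots> \<le> max_path_weight i w + of_bool (w (i, j))"
    using path_weight_le_max_path_weight[where w = w, OF us(2)] by (simp add: i_def)
  finally have "max_path_weight j w = max_path_weight i w + of_bool (w (i, j))"
    using max_path_weight_extend[OF \<open>1 \<le> i\<close>, of j w] us(3) by (simp add: i_def)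
  with \<open>1 \<le> i\<close> us(3) that show thesis by (simp add: i_def)
qed

lemma max_path_weight_cong:
  assumes "\<And>e. e \<in> tt_edges n \<Longrightarrow> w e = w' e"
  shows "max_path_weight n w = max_path_weight n w'"
proof -
  have "path_weight w vs = path_weight w' vs" if vs: "vs \<in> tt_paths n" for vs
  proof -
    have "e \<in> tt_edges n" if "e \<in> set (zip vs (tl vs))" for e
    proof -
      have "sorted_wrt (<) vs" using vs by (simp add: tt_paths_def)
      then have "fst e < snd e \<and> fst e \<in> set vs \<and> snd e \<in> set vs"
        using that by (induction vs rule: induct_list012) auto
      then show ?thesis using tt_paths_subset[OF vs] by (auto simp: tt_edges_def)
    qed
    then show ?thesis unfolding path_weight_def using assms by (intro arg_cong[where f = sum_list] map_cong) auto
  qed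
  then have "path_weight w ` tt_paths n = path_weight w' ` tt_paths n" by (rule image_cong[OF refl])
  then show ?thesis by (simp add: max_path_weight_def)
qed

section \<open>The top level\<close>

definition top_level :: "nat \<Rightarrow> ((nat \<times> nat) \<Rightarrow> bool) \<Rightarrow> nat set" where
  "top_level n w = {i \<in> {1..n}. max_path_weight i w = max_path_weight n w}"

definition top_size :: "nat \<Rightarrow> ((nat \<times> nat) \<Rightarrow> bool) \<Rightarrow> nat" where
  "top_size n w = card (top_level n w)"

definition level_rises :: "nat \<Rightarrow> ((nat \<times> nat) \<Rightarrow> bool) \<Rightarrow> bool" where
  "level_rises n w \<longleftrightarrow> (\<exists>i\<in>top_level n w. w (i, Suc n))"

lemma max_path_weight_Suc:
  assumes "1 \<le> n"
  shows "max_path_weight (Suc n) w = max_path_weight n w + of_bool (level_rises n w)"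
proof -
  from assms have "2 \<le> Suc n" by simp
  then obtain i where "1 \<le> i" "i < Suc n"
    and last: "max_path_weight (Suc n) w = max_path_weight i w + of_bool (w (i, Suc n))"
    by (rule max_path_weight_last_edge)
  then have i: "1 \<le> i" "i \<le> n" by simp_all
  have le: "max_path_weight i w \<le> max_path_weight n w"
    using max_path_weight_mono[OF i] .
  show ?thesis
  proof (cases "level_rises n w")
    case True
    then obtain i' where "i' \<in> top_level n w" "w (i', Suc n)" by (auto simp: level_rises_def)
    then have "max_path_weight n w + 1 \<le> max_path_weight (Suc n) w"
      using max_path_weight_extend[of i' "Suc n" w] by (auto simp: top_level_def)
    moreover have "max_path_weight (Suc n) w \<le> max_path_weight n w + 1"
      using last le by simp
    ultimately show ?thesis using True by simp
  next
    case False
    have "max_path_weight i w + of_bool (w (i, Suc n)) \<le> max_path_weight n w"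
    proof (cases "w (i, Suc n)")
      case True
      then have "max_path_weight i w < max_path_weight n w"
        using False i le by (auto simp: level_rises_def top_level_def less_le)
      moreover have "max_path_weight i w \<in> \<nat>" "max_path_weight n w \<in> \<nat>"
        using i max_path_weight_in_Nats by auto
      ultimately show ?thesis using True by (auto elim!: Nats_cases)
    qed (use le in simp)
    then show ?thesis
      using last False max_path_weight_mono[of n "Suc n" w] assms by simp
  qed
qed

lemma top_level_Suc:
  assumes "1 \<le> n"
  shows "top_level (Suc n) w = (if level_rises n w then {Suc n} else insert (Suc n) (top_level n w))"
proof (cases "level_rises n w")
  case True
  then have "max_path_weight (Suc n) w = max_path_weight n w + 1"
    using max_path_weight_Suc[OF assms] by simp
  then have "max_path_weight i w \<noteq> max_path_weight (Suc n) w" if "1 \<le> i" "i \<le> n" for i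
    using max_path_weight_mono[OF that, of w] by simp
  then show ?thesis using True by (auto simp: top_level_def le_Suc_eq)
next
  case False
  then show ?thesis
    using max_path_weight_Suc[OF assms, of w] by (auto simp: top_level_def le_Suc_eq)
qed

lemma top_size_Suc:
  assumes "1 \<le> n"
  shows "top_size (Suc n) w = (if level_rises n w then 1 else Suc (top_size n w))"
proof -
  have "finite (top_level n w)" "Suc n \<notin> top_level n w" by (auto simp: top_level_def)
  then show ?thesis by (simp add: top_size_def top_level_Suc[OF assms])
qed

lemma top_size_one: "top_size 1 w = 1"
proof -
  have "top_level 1 w = {1}" by (auto simp: top_level_def)
  then show ?thesis by (simp add: top_size_def)
qed

lemma top_size_bounds:
  assumes "1 \<le> n"
  shows "top_size n w \<in> {1..n}"
proof -
  have "n \<in> top_level n w" "top_level n w \<subseteq> {1..n}" using assms by (auto simp: top_level_def)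
  moreover from this(2) have "finite (top_level n w)" by (rule finite_subset) simp
  ultimately have "0 < card (top_level n w)" by (auto simp: card_gt_0_iff)
  moreover have "card (top_level n w) \<le> n"
    using card_mono[OF finite_atLeastAtMost \<open>top_level n w \<subseteq> {1..n}\<close>] by simp
  ultimately show ?thesis by (simp add: top_size_def)
qed

lemma top_level_cong:
  assumes "\<And>e. e \<in> tt_edges n \<Longrightarrow> w e = w' e"
  shows "top_level n w = top_level n w'"
proof -
  have "max_path_weight i w = max_path_weight i w'" if "i \<le> n" for i
    using that assms by (intro max_path_weight_cong) (auto simp: tt_edges_def)
  then show ?thesis by (auto simp: top_level_def)
qed

section \<open>Adding a vertex\<close>

lemma finite_set_pmf_weight_distr: "finite (set_pmf (weight_distr p n))"
  unfolding weight_distr_def by (rule finite_set_pmf_Pi_pmf[OF finite_tt_edges])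

lemma weight_distr_Suc:
  "weight_distr p (Suc n) =
     map_pmf (\<lambda>(f, g) e. if e \<in> tt_edges n then f e else g e)
       (pair_pmf (weight_distr p n) (Pi_pmf ((\<lambda>i. (i, Suc n)) ` {1..n}) False (\<lambda>_. bernoulli_pmf p)))"
proof -
  have "tt_edges (Suc n) = tt_edges n \<union> (\<lambda>i. (i, Suc n)) ` {1..n}"
    and "tt_edges n \<inter> (\<lambda>i. (i, Suc n)) ` {1..n} = {}"
    by (auto simp: tt_edges_def le_Suc_eq)
  then show ?thesis
    unfolding weight_distr_def by (simp add: Pi_pmf_union finite_tt_edges)
qed

lemma expectation_weight_distr_Suc:
  fixes \<Phi> :: "real \<Rightarrow> nat \<Rightarrow> bool \<Rightarrow> real"
  assumes "0 \<le> p" and "p \<le> 1"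
  shows "measure_pmf.expectation (weight_distr p (Suc n))
           (\<lambda>w. \<Phi> (max_path_weight n w) (top_size n w) (level_rises n w)) =
         measure_pmf.expectation (weight_distr p n) (\<lambda>w.
           measure_pmf.expectation (bernoulli_pmf (1 - (1 - p) ^ top_size n w))
             (\<Phi> (max_path_weight n w) (top_size n w)))"
proof -
  define new where "new = (\<lambda>i. (i, Suc n)) ` {1..n}"
  define B where "B = Pi_pmf new False (\<lambda>_. bernoulli_pmf p)"
  define merge :: "((nat \<times> nat) \<Rightarrow> bool) \<times> ((nat \<times> nat) \<Rightarrow> bool) \<Rightarrow> (nat \<times> nat) \<Rightarrow> bool"
    where "merge = (\<lambda>(f, g) e. if e \<in> tt_edges n then f e else g e)"
  define top_edges where "top_edges f = (\<lambda>i. (i, Suc n)) ` top_level n f" for f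
  have finite_new: "finite new" by (simp add: new_def)
  have distr: "weight_distr p (Suc n) = map_pmf merge (pair_pmf (weight_distr p n) B)"
    unfolding merge_def B_def new_def by (rule weight_distr_Suc)
  have top_level_merge: "top_level n (merge (f, g)) = top_level n f" for f g
    by (rule top_level_cong) (simp add: merge_def)
  have top_edges: "top_edges f \<subseteq> new" "card (top_edges f) = top_size n f" for f
    by (auto simp: top_edges_def new_def top_level_def top_size_def card_image inj_on_def)
  have "merge (f, g) (i, Suc n) = g (i, Suc n)" for f g i
    by (simp add: merge_def tt_edges_def)
  then have "level_rises n (merge (f, g)) = (\<exists>e\<in>top_edges f. g e)" for f g
    by (simp add: level_rises_def top_level_merge top_edges_def)
  moreover have "max_path_weight n (merge (f, g)) = max_path_weight n f" for f g
    by (rule max_path_weight_cong) (simp add: merge_def)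
  ultimately have "measure_pmf.expectation (weight_distr p (Suc n))
       (\<lambda>w. \<Phi> (max_path_weight n w) (top_size n w) (level_rises n w)) =
     measure_pmf.expectation (pair_pmf (weight_distr p n) B)
       (\<lambda>(f, g). \<Phi> (max_path_weight n f) (top_size n f) (\<exists>e\<in>top_edges f. g e))"
    unfolding distr integral_map_pmf top_size_def
    by (intro Bochner_Integration.integral_cong refl) (auto simp: top_level_merge split: prod.split)
  also have "\<dots> = measure_pmf.expectation (weight_distr p n) (\<lambda>f.
      measure_pmf.expectation (map_pmf (\<lambda>g. \<exists>e\<in>top_edges f. g e) B)
        (\<Phi> (max_path_weight n f) (top_size n f)))"
    unfolding B_def
    by (simp add: expectation_pair_pmf finite_set_pmf_weight_distr finite_set_pmf_Pi_pmf finite_new)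
  also have "\<dots> = measure_pmf.expectation (weight_distr p n) (\<lambda>f.
      measure_pmf.expectation (bernoulli_pmf (1 - (1 - p) ^ top_size n f))
        (\<Phi> (max_path_weight n f) (top_size n f)))"
    unfolding B_def using top_edges assms
    by (simp add: map_pmf_Bex_Pi_pmf_bernoulli[OF finite_new])
  finally show ?thesis .
qed

definition top_size_distr :: "real \<Rightarrow> nat \<Rightarrow> nat pmf" where
  "top_size_distr p n = map_pmf (top_size n) (weight_distr p n)"

lemma top_size_distr_zero: "top_size_distr p 0 = return_pmf 0"
proof -
  have "top_size 0 = (\<lambda>_. 0)" by (simp add: fun_eq_iff top_size_def top_level_def)
  then show ?thesis unfolding top_size_distr_def by simp
qed

lemma top_size_distr_one: "top_size_distr p 1 = return_pmf 1"
proof -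
  have "top_size 1 = (\<lambda>_. 1)" by (rule ext) (rule top_size_one)
  then show ?thesis unfolding top_size_distr_def by simp
qed

lemma pmf_top_size_distr_Suc_Suc:
  assumes "1 \<le> n" and "1 \<le> k" and "0 \<le> p" and "p \<le> 1"
  shows "pmf (top_size_distr p (Suc n)) (Suc k) = (1 - p) ^ k * pmf (top_size_distr p n) k"
proof -
  have "pmf (top_size_distr p (Suc n)) (Suc k) = measure_pmf.expectation (weight_distr p (Suc n))
          (\<lambda>w. of_bool ((if level_rises n w then 1 else Suc (top_size n w)) = Suc k))"
    by (simp add: top_size_distr_def pmf_map_pmf_conv_expectation top_size_Suc[OF assms(1)])
  also have "\<dots> = measure_pmf.expectation (weight_distr p n)
                     (\<lambda>w. of_bool (top_size n w = k) * (1 - p) ^ top_size n w)"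
    using expectation_weight_distr_Suc[OF assms(3,4),
            where \<Phi> = "\<lambda>_ r b. of_bool ((if b then 1 else Suc r) = Suc k)"] assms
    by (simp add: power_le_one)
  also have "\<dots> = measure_pmf.expectation (weight_distr p n)
                     (\<lambda>w. (1 - p) ^ k * of_bool (top_size n w = k))"
    by (intro Bochner_Integration.integral_cong refl) simp
  also have "\<dots> = (1 - p) ^ k * pmf (top_size_distr p n) k"
    by (simp add: top_size_distr_def pmf_map_pmf_conv_expectation)
  finally show ?thesis .
qed

lemma pmf_top_size_distr:
  assumes "1 \<le> k" and "k \<le> n" and "0 \<le> p" and "p \<le> 1"
  shows "pmf (top_size_distr p n) k = pmf (top_size_distr p (Suc n - k)) 1 * (1 - p) ^ (k choose 2)"
  using assms(1,2)
proof (induction k arbitrary: n rule: nat_induct_at_least)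
  case base
  then show ?case by (simp add: binomial_eq_0)
next
  case (Suc k)
  then obtain n' where n: "n = Suc n'" "k \<le> n'" by (cases n) auto
  have "Suc k choose 2 = k + (k choose 2)" by (simp add: numeral_2_eq_2)
  then show ?case
    using Suc.IH[OF n(2)] Suc.hyps n assms(3,4)
    by (simp add: pmf_top_size_distr_Suc_Suc power_add)
qed

lemma sum_pmf_top_size_distr:
  assumes "1 \<le> n"
  shows "(\<Sum>k=1..n. pmf (top_size_distr p n) k) = 1"
  using top_size_bounds[OF assms] by (intro sum_pmf_eq_1) (auto simp: top_size_distr_def)

lemma exp_X_one: "exp_X p 1 = 0"
proof -
  have "max_path_weight 1 = (\<lambda>_. 0)" by (rule ext) (rule max_path_weight_one)
  then show ?thesis unfolding exp_X_def by simp
qed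

lemma exp_X_Suc:
  assumes "1 \<le> n" and "0 \<le> p" and "p \<le> 1"
  shows "exp_X p (Suc n) = exp_X p n + pmf (top_size_distr p (Suc n)) 1"
proof -
  let ?E = "measure_pmf.expectation (weight_distr p n)"
  let ?rise = "\<lambda>w. 1 - (1 - p) ^ top_size n w"
  have rise: "0 \<le> ?rise w" "?rise w \<le> 1" for w using assms by (simp_all add: power_le_one)
  have "exp_X p (Suc n) = measure_pmf.expectation (weight_distr p (Suc n))
          (\<lambda>w. max_path_weight n w + of_bool (level_rises n w))"
    unfolding exp_X_def
    by (intro Bochner_Integration.integral_cong refl) (rule max_path_weight_Suc[OF assms(1)])
  also have "\<dots> = ?E (\<lambda>w. max_path_weight n w + ?rise w)"
    using expectation_weight_distr_Suc[OF assms(2,3), where \<Phi> = "\<lambda>x _ b. x + of_bool b"] rise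
    by (simp add: algebra_simps)
  also have "\<dots> = exp_X p n + ?E ?rise"
    unfolding exp_X_def
    by (intro Bochner_Integration.integral_add integrable_measure_pmf_finite finite_set_pmf_weight_distr)
  also have "?E ?rise = pmf (top_size_distr p (Suc n)) 1"
  proof -
    have "top_size (Suc n) w = 1 \<longleftrightarrow> level_rises n w" for w
      using top_size_bounds[OF assms(1), of w] by (simp add: top_size_Suc[OF assms(1)])
    then have "pmf (top_size_distr p (Suc n)) 1 =
               measure_pmf.expectation (weight_distr p (Suc n)) (\<lambda>w. of_bool (level_rises n w))"
      by (simp add: top_size_distr_def pmf_map_pmf_conv_expectation)
    also have "\<dots> = ?E ?rise"
      using expectation_weight_distr_Suc[OF assms(2,3), where \<Phi> = "\<lambda>_ _ b. of_bool b"] rise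
      by simp
    finally show ?thesis ..
  qed
  finally show ?thesis .
qed

section \<open>Generating functions\<close>

lemma fps_nth_mult_one_minus_X:
  fixes f :: "'a::comm_ring_1 fps"
  shows "fps_nth (f * (1 - fps_X)) n = fps_nth f n - (if n = 0 then 0 else fps_nth f (n - 1))"
proof -
  have "f * (1 - fps_X) = f - f * fps_X" by (simp add: right_diff_distrib)
  then show ?thesis by simp
qed

lemma fps_eq_mult_inverseI:
  fixes f g h :: "'a::field fps"
  assumes "f * g = h" and "fps_nth g 0 \<noteq> 0"
  shows "f = h * inverse g"
proof -
  have "f = f * (g * inverse g)" using inverse_mult_eq_1'[OF assms(2)] by simp
  also have "\<dots> = h * inverse g" by (simp only: mult.assoc[symmetric] assms(1))
  finally show ?thesis .
qed

definition top_size_one_fps :: "real \<Rightarrow> real fps" where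
  "top_size_one_fps p = Abs_fps (\<lambda>n. pmf (top_size_distr p n) 1)"

lemma G_fps_minus_one_mult:
  assumes "0 \<le> p" and "p \<le> 1"
  shows "(G_fps p - 1) * (1 - fps_X) = top_size_one_fps p"
proof (rule fps_ext)
  fix n
  consider "n = 0" | "n = 1" | m where "n = Suc (Suc m)"
    by (metis One_nat_def not0_implies_Suc)
  then show "fps_nth ((G_fps p - 1) * (1 - fps_X)) n = fps_nth (top_size_one_fps p) n"
  proof cases
    case 1
    then show ?thesis
      by (simp add: fps_nth_mult_one_minus_X G_fps_def g_seq_def top_size_one_fps_def top_size_distr_zero)
  next
    case 2
    then show ?thesis
      using exp_X_one[of p] top_size_distr_one[of p]
      by (simp add: fps_nth_mult_one_minus_X G_fps_def g_seq_def top_size_one_fps_def)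
  next
    case 3
    then show ?thesis
      using exp_X_Suc[OF _ assms, of "Suc m"]
      by (simp add: fps_nth_mult_one_minus_X G_fps_def g_seq_def top_size_one_fps_def)
  qed
qed

lemma top_size_one_fps_mult_B_fps:
  assumes "0 \<le> p" and "p \<le> 1"
  shows "top_size_one_fps p * B_fps p * (1 - fps_X) = fps_X"
proof -
  let ?u = "\<lambda>i. pmf (top_size_distr p i) 1"
  have u0: "?u 0 = 0" by (simp add: top_size_distr_zero)
  have UB: "fps_nth (top_size_one_fps p * B_fps p) n = of_bool (n \<noteq> 0)" for n
  proof (cases "n = 0")
    case False
    have "fps_nth (top_size_one_fps p * B_fps p) n = (\<Sum>i=1..n. ?u i * (1 - p) ^ (Suc (n - i) choose 2))"
      using u0 by (simp add: fps_mult_nth top_size_one_fps_def B_fps_def sum.atLeast_Suc_atMost)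
    also have "\<dots> = (\<Sum>k=1..n. ?u (Suc n - k) * (1 - p) ^ (k choose 2))"
      by (subst (2) sum.atLeastAtMost_rev) (intro sum.cong refl, auto simp: Suc_diff_le)
    also have "\<dots> = (\<Sum>k=1..n. pmf (top_size_distr p n) k)"
      using assms by (intro sum.cong refl) (simp add: pmf_top_size_distr)
    also have "\<dots> = 1"
      by (rule sum_pmf_top_size_distr) (use False in simp)
    finally show ?thesis using False by simp
  qed (use u0 in \<open>simp add: top_size_one_fps_def B_fps_def\<close>)
  show ?thesis
  proof (rule fps_ext)
    fix n
    show "fps_nth (top_size_one_fps p * B_fps p * (1 - fps_X)) n = fps_nth fps_X n"
      unfolding fps_nth_mult_one_minus_X UB by (simp add: fps_X_nth)
  qed
qed

theorem theorem2:
  fixes p :: real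
  assumes "0 < p" and "p < 1"
  shows "G_fps p = 1 + fps_X * inverse ((1 - fps_X)\<^sup>2 * B_fps p)"
proof -
  have "(G_fps p - 1) * ((1 - fps_X)\<^sup>2 * B_fps p) =
        ((G_fps p - 1) * (1 - fps_X)) * B_fps p * (1 - fps_X)"
    by (simp add: power2_eq_square mult_ac)
  also have "\<dots> = fps_X"
    using assms by (simp add: G_fps_minus_one_mult top_size_one_fps_mult_B_fps)
  finally have "G_fps p - 1 = fps_X * inverse ((1 - fps_X)\<^sup>2 * B_fps p)"
    by (rule fps_eq_mult_inverseI) (simp add: B_fps_def)
  then show ?thesis by (simp add: algebra_simps)
qed

end
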